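(* Let $d\ge2$, $\varepsilon\in(0,1)$, $c\in\{1,2,\dots\}\cup\{\infty\}$, and let $W$ be the gap process of the $d$-ball SBBS. Fix $j\in\{1,\dots,d-1\}$ and let $x\in\mathbb Z^{d-1}_{\ge0}$ with $x_j=0$, $x_{j+1}\ge2$ (if $j+1\le d-1$) and $x_i\ge1$ for all $i\notin\{j,j+1\}$. Then $R_j:=\mathbb E[W_1-W_0\mid W_0=x]\in\mathbb R^{d-1}$ is given, with coordinates outside $\{1,\dots,d-1\}$ omitted and all unlisted coordinates equal to $0$, by: - if $c=1$: $(R_j)_j=\varepsilon(1-\varepsilon)$, $(R_j)_{j+1}=-\varepsilon(1-\varepsilon)$; - if $c\ge2$: $(R_j)_{j-1}=(1-\varepsilon)^2$, $(R_j)_j=\varepsilon(1-\varepsilon)$, $(R_j)_{j+1}=-(1-\varepsilon)$. In particular the $(d-1)\times(d-1)$ matrix $[R_1,\dots,R_{d-1}]$ equals $(1-\varepsilon)\hat R^{\varepsilon,c}$.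
   Context: Stochastic box-ball system (SBBS). Fix an error probability $\varepsilon\in[0,1]$ and a capacity $c\in\{1,2,\dots\}\cup\{\infty\}$. A configuration is $\zeta\in\{0,1\}^{\mathbb N}$, $\mathbb N=\{1,2,\dots\}$, with finitely many $1$'s (balls). Given $\zeta$, the stochastic carrier process $\Gamma$ is defined by $\Gamma(0)=0$ and recursively (with fresh independent randomness at each $k$): $\Gamma(k)=\Gamma(k-1)+1$ with probability $1-\varepsilon$ (and $\Gamma(k)=\Gamma(k-1)$ otherwise) if $\zeta(k)=1$ and $\Gamma(k-1)<c$; $\Gamma(k)=\Gamma(k-1)-1$ if $\zeta(k)=0$ and $\Gamma(k-1)\ge1$; $\Gamma(k)=\Gamma(k-1)$ otherwise. The new configuration is $\zeta'(k)=\mathbf 1(\Gamma(k)-\Gamma(k-1)=-1)+\mathbf 1(\Gamma(k)=\Gamma(k-1),\ \zeta(k)=1)$. Iterating independently gives the SBBS trajectory. With $d$ balls at positions $\zeta^{(1)}_t<\dots<\zeta^{(d)}_t$, the gap process is $W_t=(W^1_t,\dots,W^{d-1}_t)$, $W^i_t=\zeta^{(i+1)}_t-\zeta^{(i)}_t-1$, a time-homogeneous Markov chain on $\mathbb Z^{d-1}_{\ge0}$. $\mathrm{tridiag}_r(a,b,c)$ is the $r\times r$ tridiagonal matrix with diagonal $b$, subdiagonal $a$, superdiagonal $c$; $R_{\mathrm{PT}}=\mathrm{tridiag}_{d-1}(-1,1,0)$; $\hat R^{\varepsilon,c}=\varepsilon R_{\mathrm{PT}}$ if $c=1$ and $\hat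 R^{\varepsilon,c}=\mathrm{tridiag}_{d-1}(-1,\varepsilon,1-\varepsilon)$ if $c\ge2$. *)

theory Defs
  imports "HOL-Probability.Probability" "HOL-Library.Extended_Nat"
begin

text \<open>Configurations: finite sets of occupied sites in {1,2,...} (0 is never occupied).
  Capacity c :: enat, with \<infinity> standing for infinite capacity.
  The carrier state is (Gamma(k), set of sites k' \<le> k with zeta'(k') = 1).\<close>

definition sbbs_carrier_step ::
  "real \<Rightarrow> enat \<Rightarrow> nat set \<Rightarrow> nat \<Rightarrow> nat \<times> nat set \<Rightarrow> (nat \<times> nat set) pmf" where
  "sbbs_carrier_step \<epsilon> c \<zeta> k st =
     (case st of (g, S) \<Rightarrow>
       if k \<in> \<zeta> \<and> enat g < c then
         map_pmf (\<lambda>b. if b then (g + 1, S) else (g, insert k S)) (bernoulli_pmf (1 - \<epsilon>))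
       else if k \<notin> \<zeta> \<and> g \<ge> 1 then return_pmf (g - 1, insert k S)
       else if k \<in> \<zeta> then return_pmf (g, insert k S)
       else return_pmf (g, S))"

fun sbbs_run :: "real \<Rightarrow> enat \<Rightarrow> nat set \<Rightarrow> nat \<Rightarrow> (nat \<times> nat set) pmf" where
  "sbbs_run \<epsilon> c \<zeta> 0 = return_pmf (0, {})"
| "sbbs_run \<epsilon> c \<zeta> (Suc k) = bind_pmf (sbbs_run \<epsilon> c \<zeta> k) (sbbs_carrier_step \<epsilon> c \<zeta> (Suc k))"

text \<open>One SBBS update. Beyond site Max zeta + card zeta the carrier is empty and zeta is 0,
  so no further balls are produced; hence scanning up to that site gives the full zeta'.\<close>
definition sbbs_step :: "real \<Rightarrow> enat \<Rightarrow> nat set \<Rightarrow> nat set pmf" where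
  "sbbs_step \<epsilon> c \<zeta> = map_pmf snd (sbbs_run \<epsilon> c \<zeta> (Max \<zeta> + card \<zeta> + 1))"

definition ball_pos :: "nat set \<Rightarrow> nat \<Rightarrow> nat" where
  "ball_pos \<zeta> i = sorted_list_of_set \<zeta> ! (i - 1)"

definition gap :: "nat set \<Rightarrow> nat \<Rightarrow> nat" where
  "gap \<zeta> i = ball_pos \<zeta> (Suc i) - ball_pos \<zeta> i - 1"

definition gap_drift :: "real \<Rightarrow> enat \<Rightarrow> nat set \<Rightarrow> nat \<Rightarrow> real" where
  "gap_drift \<epsilon> c \<zeta> i =
     measure_pmf.expectation (sbbs_step \<epsilon> c \<zeta>) (\<lambda>\<zeta>'. real (gap \<zeta>' i) - real (gap \<zeta> i))"

definition tridiag :: "nat \<Rightarrow> real \<Rightarrow> real \<Rightarrow> real \<Rightarrow> nat \<Rightarrow> nat \<Rightarrow> real" where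
  "tridiag r a b c i j =
     (if i < 1 \<or> i > r \<or> j < 1 \<or> j > r then 0
      else if i = j then b else if i = j + 1 then a else if j = i + 1 then c else 0)"

definition R_PT :: "nat \<Rightarrow> nat \<Rightarrow> nat \<Rightarrow> real" where
  "R_PT d = tridiag (d - 1) (-1) 1 0"

definition R_hat :: "real \<Rightarrow> enat \<Rightarrow> nat \<Rightarrow> nat \<Rightarrow> nat \<Rightarrow> real" where
  "R_hat \<epsilon> c d i j =
     (if c = 1 then \<epsilon> * R_PT d i j else tridiag (d - 1) (-1) \<epsilon> (1 - \<epsilon>) i j)"

definition R_col :: "real \<Rightarrow> enat \<Rightarrow> nat \<Rightarrow> nat \<Rightarrow> real" where
  "R_col \<epsilon> c j i =
     (if c = 1 then
        (if i = j then \<epsilon> * (1 - \<epsilon>) else if i = j + 1 then - (\<epsilon> * (1 - \<epsilon>)) else 0)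
      else
        (if i + 1 = j then (1 - \<epsilon>)^2 else if i = j then \<epsilon> * (1 - \<epsilon>)
         else if i = j + 1 then - (1 - \<epsilon>) else 0))"

end

theory Submission
  imports Defs
begin

text \<open>Let count_le A x be the number of balls of A at sites \<le> x. The i-th gap of A is one less
  than the number of sites x with count_le A x = i. Balls are conserved while the carrier scans
  the sites, so once sites 1..x have been scanned, count_le \<zeta>' x = count_le \<zeta> x - \<Gamma>(x). Hence
  the drift of the i-th gap is the sum over all sites x of
  P(\<Gamma>(x) + i = count_le \<zeta> x) - [count_le \<zeta> x = i].
  In the configurations of the theorem the law of \<Gamma>(x) is explicit: the only adjacent balls
  are the j-th and (j+1)-st, at sites q - 1 and q, and the sites q + 1 and q + 2 are empty. So
  \<Gamma>(x) is 0 at every other empty site, an independent Bernoulli(1 - \<epsilon>) indicator at every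
  other ball, and \<Gamma>(q) \<in> {0, 1, 2} is unloaded at q + 1 and q + 2. Summing these
  contributions gives the coordinates of R_j.\<close>

definition count_le :: "nat set \<Rightarrow> nat \<Rightarrow> nat" where
  "count_le A x = card {y \<in> A. y \<le> x}"

lemma count_le_Suc:
  assumes "finite A"
  shows "count_le A (Suc x) = count_le A x + (if Suc x \<in> A then 1 else 0)"
proof -
  have "{y \<in> A. y \<le> Suc x} =
      (if Suc x \<in> A then insert (Suc x) {y \<in> A. y \<le> x} else {y \<in> A. y \<le> x})"
    using le_Suc_eq by auto
  then show ?thesis using assms by (simp add: count_le_def)
qed

lemma count_le_le_card: "finite A \<Longrightarrow> count_le A x \<le> card A"
  unfolding count_le_def by (intro card_mono) auto

lemma ball_pos_less:
  assumes "finite A" "1 \<le> a" "a < b" "b \<le> card A"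
  shows "ball_pos A a < ball_pos A b"
  using assms by (simp add: ball_pos_def sorted_wrt_nth_less)

lemma ball_pos_mono:
  assumes "finite A" "1 \<le> a" "a \<le> b" "b \<le> card A"
  shows "ball_pos A a \<le> ball_pos A b"
  using ball_pos_less[OF assms(1,2) _ assms(4)] assms(3) by (cases "a = b") auto

lemma ball_pos_in:
  assumes "finite A" "1 \<le> k" "k \<le> card A"
  shows "ball_pos A k \<in> A"
proof -
  have "k - 1 < length (sorted_list_of_set A)" using assms by simp
  then have "sorted_list_of_set A ! (k - 1) \<in> set (sorted_list_of_set A)" by (rule nth_mem)
  then show ?thesis using assms(1) by (simp add: ball_pos_def)
qed

lemma ball_pos_cases:
  assumes "finite A" "y \<in> A"
  obtains k where "1 \<le> k" "k \<le> card A" "ball_pos A k = y"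
proof -
  from assms obtain l where "l < card A" "sorted_list_of_set A ! l = y"
    by (metis in_set_conv_nth length_sorted_list_of_set set_sorted_list_of_set)
  then show thesis by (intro that[of "Suc l"]) (simp_all add: ball_pos_def)
qed

lemma ball_pos_le_iff:
  assumes A: "finite A" and k: "1 \<le> k" "k \<le> card A"
  shows "ball_pos A k \<le> x \<longleftrightarrow> k \<le> count_le A x"
proof
  assume "ball_pos A k \<le> x"
  then have "ball_pos A ` {1..k} \<subseteq> {y \<in> A. y \<le> x}"
    using ball_pos_in[OF A] ball_pos_mono[OF A] k by (fastforce intro: order.trans)
  moreover have "inj_on (ball_pos A) {1..k}"
  proof (rule inj_onI)
    fix a b assume "a \<in> {1..k}" "b \<in> {1..k}" "ball_pos A a = ball_pos A b"
    then show "a = b"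
      using ball_pos_less[OF A, of a b] ball_pos_less[OF A, of b a] k
      by (cases a b rule: linorder_cases) auto
  qed
  ultimately have "card (ball_pos A ` {1..k}) \<le> count_le A x"
    unfolding count_le_def using A by (intro card_mono) auto
  then show "k \<le> count_le A x" using \<open>inj_on (ball_pos A) {1..k}\<close> by (simp add: card_image)
next
  assume k_le: "k \<le> count_le A x"
  show "ball_pos A k \<le> x"
  proof (rule ccontr)
    assume x_less: "\<not> ball_pos A k \<le> x"
    have "{y \<in> A. y \<le> x} \<subseteq> ball_pos A ` {1..<k}"
    proof
      fix y assume y: "y \<in> {y \<in> A. y \<le> x}"
      then obtain l where l: "1 \<le> l" "l \<le> card A" "ball_pos A l = y"
        using ball_pos_cases[OF A] by blast
      have "l < k"
        using ball_pos_mono[OF A, of k l] l y k x_less by (cases "l < k") auto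
      then show "y \<in> ball_pos A ` {1..<k}" using l by auto
    qed
    then have "count_le A x \<le> card (ball_pos A ` {1..<k})"
      unfolding count_le_def by (intro card_mono) auto
    also have "\<dots> \<le> k - 1"
      using card_image_le[of "{1..<k}" "ball_pos A"] by simp
    finally show False using k_le k by simp
  qed
qed

lemma count_le_ball_pos:
  assumes A: "finite A" and k: "1 \<le> k" "k \<le> card A"
  shows "count_le A (ball_pos A k) = k"
proof -
  have "k \<le> count_le A (ball_pos A k)" using ball_pos_le_iff[OF A k, of "ball_pos A k"] by simp
  moreover have "\<not> Suc k \<le> count_le A (ball_pos A k)"
  proof (cases "k < card A")
    case True
    then show ?thesis
      using ball_pos_le_iff[OF A, of "Suc k" "ball_pos A k"] ball_pos_less[OF A k(1), of "Suc k"] by simp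
  next
    case False
    then show ?thesis using count_le_le_card[OF A, of "ball_pos A k"] k by simp
  qed
  ultimately show ?thesis by simp
qed

lemma count_le_eq_iff:
  assumes A: "finite A" and y: "y \<in> A" and k: "1 \<le> k" "k \<le> card A"
  shows "count_le A y = k \<longleftrightarrow> y = ball_pos A k"
proof -
  obtain l where l: "1 \<le> l" "l \<le> card A" "y = ball_pos A l"
    using ball_pos_cases[OF A y] by metis
  have "ball_pos A l = ball_pos A k \<longleftrightarrow> l = k"
    using ball_pos_less[OF A, of l k] ball_pos_less[OF A, of k l] l k
    by (cases l k rule: linorder_cases) auto
  then show ?thesis using count_le_ball_pos[OF A l(1,2)] l(3) by auto
qed

lemma gap_eq_sum_level_set:
  assumes A: "finite A" "A \<subseteq> {..N}" and i: "1 \<le> i" "i < card A"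
  shows "real (gap A i) = (\<Sum>x\<le>N. of_bool (count_le A x = i)) - 1"
proof -
  let ?a = "ball_pos A i" and ?b = "ball_pos A (Suc i)"
  have level: "count_le A x = i \<longleftrightarrow> ?a \<le> x \<and> x < ?b" for x
  proof -
    have "?a \<le> x \<longleftrightarrow> i \<le> count_le A x" using ball_pos_le_iff[OF A(1)] i by simp
    moreover have "?b \<le> x \<longleftrightarrow> Suc i \<le> count_le A x" using ball_pos_le_iff[OF A(1)] i by simp
    moreover have "count_le A x = i \<longleftrightarrow> i \<le> count_le A x \<and> \<not> Suc i \<le> count_le A x"
      by linarith
    ultimately show ?thesis by (metis not_le)
  qed
  have "?b \<le> N" using ball_pos_in[OF A(1), of "Suc i"] A(2) i by auto
  then have "{x \<in> {..N}. count_le A x = i} = {?a..<?b}" unfolding level by auto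
  moreover have "(\<Sum>x\<le>N. of_bool (count_le A x = i)) = real (card {x \<in> {..N}. count_le A x = i})"
    by (simp add: sum.inter_filter[symmetric] of_bool_def)
  ultimately have "(\<Sum>x\<le>N. of_bool (count_le A x = i)) = real (?b - ?a)" by simp
  moreover have "?a < ?b" using ball_pos_less[OF A(1) i(1), of "Suc i"] i by simp
  ultimately show ?thesis by (simp add: gap_def of_nat_diff)
qed

lemma sum_of_bool_count_le_eq:
  assumes A: "finite A" and m: "1 \<le> m" "m \<le> card A"
  shows "(\<Sum>x\<in>A. of_bool (count_le A x = m) :: real) = 1"
proof -
  have "{x \<in> A. count_le A x = m} = {ball_pos A m}"
    using count_le_eq_iff[OF A _ m] ball_pos_in[OF A m] by auto
  then show ?thesis using A by (simp add: of_bool_def sum.If_cases Int_def conj_commute)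
qed

definition carrier_step :: "real \<Rightarrow> enat \<Rightarrow> nat set \<Rightarrow> nat \<Rightarrow> nat \<Rightarrow> nat pmf" where
  "carrier_step \<epsilon> c \<zeta> k g =
     (if k \<in> \<zeta> \<and> enat g < c then map_pmf (\<lambda>b. if b then g + 1 else g) (bernoulli_pmf (1 - \<epsilon>))
      else if k \<notin> \<zeta> \<and> g \<ge> 1 then return_pmf (g - 1)
      else return_pmf g)"

definition carrier :: "real \<Rightarrow> enat \<Rightarrow> nat set \<Rightarrow> nat \<Rightarrow> nat pmf" where
  "carrier \<epsilon> c \<zeta> x = map_pmf fst (sbbs_run \<epsilon> c \<zeta> x)"

lemma map_fst_sbbs_carrier_step:
  "map_pmf fst (sbbs_carrier_step \<epsilon> c \<zeta> k st) = carrier_step \<epsilon> c \<zeta> k (fst st)"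
  unfolding sbbs_carrier_step_def carrier_step_def
  by (cases st) (auto simp: map_pmf_comp intro!: map_pmf_cong)

lemma carrier_0: "carrier \<epsilon> c \<zeta> 0 = return_pmf 0"
  by (simp add: carrier_def)

lemma carrier_Suc: "carrier \<epsilon> c \<zeta> (Suc x) = bind_pmf (carrier \<epsilon> c \<zeta> x) (carrier_step \<epsilon> c \<zeta> (Suc x))"
  unfolding carrier_def
  by (simp add: map_bind_pmf bind_map_pmf map_fst_sbbs_carrier_step)

lemma set_pmf_sbbs_carrier_step:
  assumes "st' \<in> set_pmf (sbbs_carrier_step \<epsilon> c \<zeta> k (g, S))"
  shows "k \<in> \<zeta> \<and> (st' = (g + 1, S) \<or> st' = (g, insert k S))
       \<or> k \<notin> \<zeta> \<and> g \<ge> 1 \<and> st' = (g - 1, insert k S)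
       \<or> k \<notin> \<zeta> \<and> g = 0 \<and> st' = (g, S)"
  using assms by (auto simp: sbbs_carrier_step_def split: if_splits)

lemma finite_set_pmf_sbbs_run: "finite (set_pmf (sbbs_run \<epsilon> c \<zeta> x))"
proof (induction x)
  case (Suc x)
  have "set_pmf (sbbs_carrier_step \<epsilon> c \<zeta> (Suc x) (g, S)) \<subseteq>
      {(g + 1, S), (g, insert (Suc x) S), (g - 1, insert (Suc x) S), (g, S)}" for g S
    using set_pmf_sbbs_carrier_step[of _ \<epsilon> c \<zeta> "Suc x" g S] by auto
  then have "finite (set_pmf (sbbs_carrier_step \<epsilon> c \<zeta> (Suc x) st))" for st
    by (cases st) (auto intro: finite_subset)
  with Suc show ?case by simp
qed simp

lemma sbbs_run_output_subset:
  "st \<in> set_pmf (sbbs_run \<epsilon> c \<zeta> x) \<Longrightarrow> snd st \<subseteq> {..x}"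
proof (induction x arbitrary: st)
  case (Suc x)
  then obtain g S where "(g, S) \<in> set_pmf (sbbs_run \<epsilon> c \<zeta> x)"
    and "st \<in> set_pmf (sbbs_carrier_step \<epsilon> c \<zeta> (Suc x) (g, S))" by auto
  with Suc.IH show ?case using set_pmf_sbbs_carrier_step by fastforce
qed simp

lemma sbbs_run_conserves_balls:
  assumes "finite \<zeta>" "0 \<notin> \<zeta>" "st \<in> set_pmf (sbbs_run \<epsilon> c \<zeta> x)"
  shows "card (snd st) + fst st = count_le \<zeta> x"
  using assms(3)
proof (induction x arbitrary: st)
  case 0
  have "{y \<in> \<zeta>. y \<le> 0} = {}" using assms(2) by auto
  with 0 show ?case by (simp add: count_le_def)
next
  case (Suc x)
  then obtain g S where gS: "(g, S) \<in> set_pmf (sbbs_run \<epsilon> c \<zeta> x)"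
    and st: "st \<in> set_pmf (sbbs_carrier_step \<epsilon> c \<zeta> (Suc x) (g, S))" by auto
  have "S \<subseteq> {..x}" using sbbs_run_output_subset[OF gS] by simp
  then have "finite S" "Suc x \<notin> S" by (auto intro: finite_subset)
  then show ?case
    using set_pmf_sbbs_carrier_step[OF st] Suc.IH[OF gS] count_le_Suc[OF assms(1), of x] by auto
qed

lemma sbbs_run_restrict:
  assumes "x \<le> N"
  shows "map_pmf (\<lambda>st. {y \<in> snd st. y \<le> x}) (sbbs_run \<epsilon> c \<zeta> N) = map_pmf snd (sbbs_run \<epsilon> c \<zeta> x)"
  using assms
proof (induction N rule: dec_induct)
  case base
  show ?case
    by (intro map_pmf_cong) (use sbbs_run_output_subset in fastforce)+
next
  case (step n)
  let ?f = "\<lambda>st :: nat \<times> nat set. {y \<in> snd st. y \<le> x}"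
  have step_const: "map_pmf ?f (sbbs_carrier_step \<epsilon> c \<zeta> (Suc n) st) = return_pmf (?f st)" for st
  proof -
    have "?f st' = ?f st" if "st' \<in> set_pmf (sbbs_carrier_step \<epsilon> c \<zeta> (Suc n) st)" for st'
      using set_pmf_sbbs_carrier_step[of st' \<epsilon> c \<zeta> "Suc n" "fst st" "snd st"] that step.hyps
      by auto
    then show ?thesis by (simp add: map_pmf_const[symmetric] cong: map_pmf_cong)
  qed
  have "map_pmf ?f (sbbs_run \<epsilon> c \<zeta> (Suc n)) = bind_pmf (sbbs_run \<epsilon> c \<zeta> n) (\<lambda>st. return_pmf (?f st))"
    by (simp add: map_bind_pmf step_const)
  also have "\<dots> = map_pmf ?f (sbbs_run \<epsilon> c \<zeta> n)" by (simp add: map_pmf_def)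
  finally show ?case using step.IH by simp
qed

lemma prob_count_le_output:
  assumes "finite \<zeta>" "0 \<notin> \<zeta>" "x \<le> N"
  shows "measure_pmf.prob (sbbs_run \<epsilon> c \<zeta> N) {st. count_le (snd st) x = i}
       = measure_pmf.prob (carrier \<epsilon> c \<zeta> x) {g. g + i = count_le \<zeta> x}"
proof -
  let ?R = "sbbs_run \<epsilon> c \<zeta> x"
  have on_support: "{st. card (snd st) = i} \<inter> set_pmf ?R = {st. fst st + i = count_le \<zeta> x} \<inter> set_pmf ?R"
    using sbbs_run_conserves_balls[OF assms(1,2)] by force
  have "measure_pmf.prob (sbbs_run \<epsilon> c \<zeta> N) {st. count_le (snd st) x = i}
      = measure_pmf.prob (map_pmf (\<lambda>st. {y \<in> snd st. y \<le> x}) (sbbs_run \<epsilon> c \<zeta> N)) {T. card T = i}"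
    by (simp add: count_le_def vimage_def)
  also have "\<dots> = measure_pmf.prob ?R {st. card (snd st) = i}"
    using sbbs_run_restrict[OF assms(3)] by (simp add: vimage_def)
  also have "\<dots> = measure_pmf.prob ?R {st. fst st + i = count_le \<zeta> x}"
    using on_support by (metis measure_Int_set_pmf)
  finally show ?thesis by (simp add: carrier_def vimage_def)
qed

lemma sbbs_run_carrier_le:
  assumes "finite \<zeta>" "0 \<notin> \<zeta>" "\<forall>y \<in> \<zeta>. y \<le> M" "st \<in> set_pmf (sbbs_run \<epsilon> c \<zeta> (M + k))"
  shows "fst st \<le> card \<zeta> - k"
  using assms(4)
proof (induction k arbitrary: st)
  case 0
  then show ?case
    using sbbs_run_conserves_balls[OF assms(1,2)] count_le_le_card[OF assms(1), of M] by fastforce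
next
  case (Suc k)
  then obtain g S where gS: "(g, S) \<in> set_pmf (sbbs_run \<epsilon> c \<zeta> (M + k))"
    and st: "st \<in> set_pmf (sbbs_carrier_step \<epsilon> c \<zeta> (Suc (M + k)) (g, S))" by auto
  have "Suc (M + k) \<notin> \<zeta>" using assms(3) by auto
  then show ?case using set_pmf_sbbs_carrier_step[OF st] Suc.IH[OF gS] by auto
qed

lemma sbbs_run_carrier_empty:
  assumes "finite \<zeta>" "0 \<notin> \<zeta>" "st \<in> set_pmf (sbbs_run \<epsilon> c \<zeta> (Max \<zeta> + card \<zeta> + 1))"
  shows "fst st = 0"
  using sbbs_run_carrier_le[OF assms(1,2), where M = "Max \<zeta>" and k = "card \<zeta> + 1"] assms
  by auto

lemma gap_drift_eq_sum:
  assumes fin: "finite \<zeta>" and z0: "0 \<notin> \<zeta>" and i: "1 \<le> i" "i < card \<zeta>"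
  defines "N \<equiv> Max \<zeta> + card \<zeta> + 1"
  shows "gap_drift \<epsilon> c \<zeta> i = (\<Sum>x\<le>N. measure_pmf.prob (carrier \<epsilon> c \<zeta> x) {g. g + i = count_le \<zeta> x}
                                      - of_bool (count_le \<zeta> x = i))"
proof -
  let ?R = "sbbs_run \<epsilon> c \<zeta> N"
  let ?f = "\<lambda>x st. indicator {st. count_le (snd st) x = i} st - of_bool (count_le \<zeta> x = i) :: real"
  have \<zeta>_le_N: "\<zeta> \<subseteq> {..N}" using fin by (auto simp: N_def dest: Max_ge)
  then have "{y \<in> \<zeta>. y \<le> N} = \<zeta>" by auto
  then have "count_le \<zeta> N = card \<zeta>" by (simp add: count_le_def)
  have gap_increment: "real (gap (snd st) i) - real (gap \<zeta> i) = (\<Sum>x\<le>N. ?f x st)"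
    if st: "st \<in> set_pmf ?R" for st
  proof -
    have "card (snd st) = card \<zeta>"
      using sbbs_run_conserves_balls[OF fin z0 st] sbbs_run_carrier_empty[OF fin z0] st
        \<open>count_le \<zeta> N = card \<zeta>\<close> by (simp add: N_def)
    moreover have "snd st \<subseteq> {..N}" using sbbs_run_output_subset[OF st] .
    ultimately show ?thesis
      using gap_eq_sum_level_set[of "snd st" N i] gap_eq_sum_level_set[OF fin \<zeta>_le_N i] i
      by (simp add: sum_subtractf finite_subset indicator_def)
  qed
  have "gap_drift \<epsilon> c \<zeta> i = measure_pmf.expectation ?R (\<lambda>st. real (gap (snd st) i) - real (gap \<zeta> i))"
    by (simp add: gap_drift_def sbbs_step_def N_def)
  also have "\<dots> = measure_pmf.expectation ?R (\<lambda>st. \<Sum>x\<le>N. ?f x st)"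
    using gap_increment by (simp add: integral_measure_pmf[OF finite_set_pmf_sbbs_run])
  also have "\<dots> = (\<Sum>x\<le>N. measure_pmf.expectation ?R (?f x))"
    by (simp add: integrable_measure_pmf_finite[OF finite_set_pmf_sbbs_run])
  also have "\<dots> = (\<Sum>x\<le>N. measure_pmf.prob ?R {st. count_le (snd st) x = i} - of_bool (count_le \<zeta> x = i))"
    by (simp add: integrable_measure_pmf_finite[OF finite_set_pmf_sbbs_run])
  finally show ?thesis
    using prob_count_le_output[OF fin z0, of _ N] by (simp add: atMost_iff)
qed

lemma prob_bind_bernoulli:
  assumes "0 \<le> p" "p \<le> 1"
  shows "measure_pmf.prob (bind_pmf (bernoulli_pmf p) g) A
       = p * measure_pmf.prob (g True) A + (1 - p) * measure_pmf.prob (g False) A"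
proof -
  have "ennreal (measure_pmf.prob (bind_pmf (bernoulli_pmf p) g) A)
      = emeasure (measure_pmf (g True)) A * ennreal p + emeasure (measure_pmf (g False)) A * ennreal (1 - p)"
    using assms by (simp add: measure_pmf.emeasure_eq_measure[symmetric])
  also have "\<dots> = ennreal (p * measure_pmf.prob (g True) A + (1 - p) * measure_pmf.prob (g False) A)"
    using assms by (simp add: measure_pmf.emeasure_eq_measure ennreal_mult ennreal_plus mult.commute)
  finally show ?thesis using assms by (subst (asm) ennreal_inj) auto
qed

lemma prob_map_bernoulli:
  assumes "0 \<le> p" "p \<le> 1"
  shows "measure_pmf.prob (map_pmf f (bernoulli_pmf p)) A
       = p * of_bool (f True \<in> A) + (1 - p) * of_bool (f False \<in> A)"
  unfolding map_pmf_def using assms by (simp add: prob_bind_bernoulli indicator_def)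

locale sbbs_adjacent_pair =
  fixes \<epsilon> :: real and c :: enat and \<zeta> :: "nat set" and d j :: nat
  assumes d: "d \<ge> 2" and \<epsilon>: "0 < \<epsilon>" "\<epsilon> < 1" and c: "c \<ge> 1"
    and j: "1 \<le> j" "j \<le> d - 1"
    and \<zeta>: "finite \<zeta>" "card \<zeta> = d" "0 \<notin> \<zeta>"
    and gap_j: "gap \<zeta> j = 0"
    and gap_Suc_j: "j + 1 \<le> d - 1 \<longrightarrow> gap \<zeta> (j + 1) \<ge> 2"
    and gap_other: "\<forall>i \<in> {1..d-1} - {j, j + 1}. gap \<zeta> i \<ge> 1"
begin

definition p :: nat where "p = ball_pos \<zeta> j"
definition q :: nat where "q = ball_pos \<zeta> (Suc j)"

lemma Suc_j_le_d: "Suc j \<le> d"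
  using j d by simp

lemma q_eq_Suc_p: "q = Suc p"
  using ball_pos_less[OF \<zeta>(1) j(1), of "Suc j"] gap_j Suc_j_le_d \<zeta>(2)
  by (simp add: p_def q_def gap_def)

lemma p_in: "p \<in> \<zeta>" and q_in: "q \<in> \<zeta>"
  using ball_pos_in[OF \<zeta>(1)] j \<zeta>(2) d by (auto simp: p_def q_def)

lemma count_le_q: "count_le \<zeta> q = Suc j"
  using count_le_ball_pos[OF \<zeta>(1)] j \<zeta>(2) d by (simp add: q_def)

lemma adjacent_balls:
  assumes x: "x \<in> \<zeta>" "Suc x \<in> \<zeta>"
  shows "x = p"
proof -
  obtain k where k: "1 \<le> k" "k \<le> card \<zeta>" "ball_pos \<zeta> k = x"
    using ball_pos_cases[OF \<zeta>(1) x(1)] by metis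
  have "count_le \<zeta> (Suc x) = Suc k"
    using count_le_Suc[OF \<zeta>(1), of x] count_le_ball_pos[OF \<zeta>(1) k(1,2)] k(3) x(2) by simp
  then have "Suc k \<le> d" "ball_pos \<zeta> (Suc k) = Suc x"
    using count_le_le_card[OF \<zeta>(1), of "Suc x"] count_le_eq_iff[OF \<zeta>(1) x(2), of "Suc k"] \<zeta>(2)
    by auto
  then have "gap \<zeta> k = 0" "k \<in> {1..d-1}" using k \<zeta>(2) by (auto simp: gap_def)
  moreover from this have "k \<noteq> j + 1" using gap_Suc_j by auto
  ultimately have "k = j" using gap_other by force
  then show ?thesis using k by (simp add: p_def)
qed

lemma Suc_q_notin: "Suc q \<notin> \<zeta>"
  using adjacent_balls[OF q_in] q_eq_Suc_p by auto

lemma Suc_Suc_q_notin: "Suc (Suc q) \<notin> \<zeta>"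
proof
  assume in_\<zeta>: "Suc (Suc q) \<in> \<zeta>"
  have "count_le \<zeta> (Suc (Suc q)) = Suc (Suc j)"
    using count_le_Suc[OF \<zeta>(1)] count_le_q Suc_q_notin in_\<zeta> by simp
  then have "Suc (Suc j) \<le> d" "ball_pos \<zeta> (Suc (Suc j)) = Suc (Suc q)"
    using count_le_le_card[OF \<zeta>(1), of "Suc (Suc q)"] count_le_eq_iff[OF \<zeta>(1) in_\<zeta>, of "Suc (Suc j)"]
      \<zeta>(2) by auto
  then have "gap \<zeta> (Suc j) = 1" "j + 1 \<le> d - 1" by (auto simp: gap_def q_def)
  then show False using gap_Suc_j by simp
qed

definition one_pickup :: "nat pmf" where
  "one_pickup = map_pmf (\<lambda>b. if b then 1 else 0) (bernoulli_pmf (1 - \<epsilon>))"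

definition carrier_law :: "nat \<Rightarrow> nat pmf" where
  "carrier_law x =
     (if x = q then bind_pmf one_pickup (carrier_step \<epsilon> c \<zeta> q)
      else if x = Suc q then map_pmf (\<lambda>g. g - 1) (bind_pmf one_pickup (carrier_step \<epsilon> c \<zeta> q))
      else if x \<in> \<zeta> then one_pickup
      else return_pmf 0)"

lemma carrier_step_notin: "k \<notin> \<zeta> \<Longrightarrow> carrier_step \<epsilon> c \<zeta> k g = return_pmf (g - 1)"
  by (simp add: carrier_step_def)

lemma carrier_step_in_0: "k \<in> \<zeta> \<Longrightarrow> carrier_step \<epsilon> c \<zeta> k 0 = one_pickup"
proof -
  have "enat 0 < c" using c by (cases "c = 0") (auto simp: zero_enat_def[symmetric])
  then show "k \<in> \<zeta> \<Longrightarrow> ?thesis" by (simp add: carrier_step_def one_pickup_def cong: if_cong)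
qed

lemma set_carrier_law_not_q: "x \<noteq> q \<Longrightarrow> set_pmf (carrier_law x) \<subseteq> {0, 1}"
proof -
  have "set_pmf (carrier_step \<epsilon> c \<zeta> q g) \<subseteq> {g, Suc g}" for g
    using q_in by (auto simp: carrier_step_def)
  moreover have "set_pmf one_pickup \<subseteq> {0, 1}" by (auto simp: one_pickup_def)
  ultimately have "set_pmf (bind_pmf one_pickup (carrier_step \<epsilon> c \<zeta> q)) \<subseteq> {0, 1, 2}" by fastforce
  then show "x \<noteq> q \<Longrightarrow> ?thesis" using \<open>set_pmf one_pickup \<subseteq> {0, 1}\<close>
    by (auto simp: carrier_law_def)
qed

lemma carrier_eq_carrier_law: "carrier \<epsilon> c \<zeta> x = carrier_law x"
proof (induction x)
  case 0
  have "0 < q" using q_in \<zeta>(3) by (cases q) auto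
  then show ?case using \<zeta>(3) by (simp add: carrier_0 carrier_law_def)
next
  case (Suc x)
  then have step: "carrier \<epsilon> c \<zeta> (Suc x) = bind_pmf (carrier_law x) (carrier_step \<epsilon> c \<zeta> (Suc x))"
    by (simp add: carrier_Suc)
  consider "Suc x = q" | "Suc x = Suc q" | "Suc x \<noteq> q" "Suc x \<noteq> Suc q" "Suc x \<in> \<zeta>"
    | "Suc x \<noteq> q" "Suc x \<noteq> Suc q" "Suc x \<notin> \<zeta>" by blast
  then show ?case
  proof cases
    case 1
    then have "carrier_law x = one_pickup" using q_eq_Suc_p p_in by (simp add: carrier_law_def)
    with 1 step show ?thesis by (simp add: carrier_law_def)
  next
    case 2
    have "carrier_step \<epsilon> c \<zeta> (Suc q) = (\<lambda>g. return_pmf (g - 1))"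
      using carrier_step_notin[OF Suc_q_notin] by auto
    with 2 step show ?thesis by (simp add: carrier_law_def map_pmf_def)
  next
    case 3
    have "x \<notin> \<zeta>" using adjacent_balls[of x] 3 q_eq_Suc_p by auto
    moreover have "x \<noteq> Suc q" using 3 Suc_Suc_q_notin by auto
    ultimately have "carrier_law x = return_pmf 0" using 3 by (simp add: carrier_law_def)
    with 3 step show ?thesis by (simp add: bind_return_pmf carrier_step_in_0 carrier_law_def)
  next
    case 4
    have "carrier_step \<epsilon> c \<zeta> (Suc x) = (\<lambda>g. return_pmf (g - 1))"
      using carrier_step_notin[OF 4(3)] by auto
    then have "carrier \<epsilon> c \<zeta> (Suc x) = map_pmf (\<lambda>g. g - 1) (carrier_law x)"
      using step by (simp add: map_pmf_def)
    also have "\<dots> = map_pmf (\<lambda>_. 0) (carrier_law x)"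
      using set_carrier_law_not_q[of x] 4(2) by (intro map_pmf_cong) auto
    finally show ?thesis using 4 by (simp add: carrier_law_def)
  qed
qed

lemma prob_one_pickup:
  "measure_pmf.prob one_pickup A = (1 - \<epsilon>) * of_bool (1 \<in> A) + \<epsilon> * of_bool (0 \<in> A)"
  unfolding one_pickup_def using \<epsilon> by (subst prob_map_bernoulli) auto

lemma prob_carrier_step_q_1:
  "measure_pmf.prob (carrier_step \<epsilon> c \<zeta> q 1) A =
     (if c = 1 then of_bool (1 \<in> A) else (1 - \<epsilon>) * of_bool (2 \<in> A) + \<epsilon> * of_bool (1 \<in> A))"
proof (cases "c = 1")
  case True
  then show ?thesis using q_in by (simp add: carrier_step_def one_enat_def indicator_def)
next
  case False
  then have "(1 :: enat) < c" using c by (simp add: order_less_le)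
  then have "carrier_step \<epsilon> c \<zeta> q 1 = map_pmf (\<lambda>b. if b then 2 else 1) (bernoulli_pmf (1 - \<epsilon>))"
    using q_in by (simp add: carrier_step_def one_enat_def numeral_2_eq_2 cong: if_cong)
  then show ?thesis using False \<epsilon> by (simp only: prob_map_bernoulli) simp
qed

lemma prob_carrier_law_q:
  "measure_pmf.prob (carrier_law q) A =
     \<epsilon>\<^sup>2 * of_bool (0 \<in> A)
     + (\<epsilon> * (1 - \<epsilon>) + (1 - \<epsilon>) * (if c = 1 then 1 else \<epsilon>)) * of_bool (1 \<in> A)
     + (if c = 1 then 0 else (1 - \<epsilon>)\<^sup>2) * of_bool (2 \<in> A)"
proof -
  have "carrier_law q = bind_pmf (bernoulli_pmf (1 - \<epsilon>)) (\<lambda>b. carrier_step \<epsilon> c \<zeta> q (if b then 1 else 0))"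
    by (simp add: carrier_law_def one_pickup_def bind_map_pmf)
  then have "measure_pmf.prob (carrier_law q) A =
      (1 - \<epsilon>) * measure_pmf.prob (carrier_step \<epsilon> c \<zeta> q 1) A + \<epsilon> * measure_pmf.prob one_pickup A"
    using \<epsilon> carrier_step_in_0[OF q_in] by (simp add: prob_bind_bernoulli)
  also have "\<dots> = \<epsilon>\<^sup>2 * of_bool (0 \<in> A)
     + (\<epsilon> * (1 - \<epsilon>) + (1 - \<epsilon>) * (if c = 1 then 1 else \<epsilon>)) * of_bool (1 \<in> A)
     + (if c = 1 then 0 else (1 - \<epsilon>)\<^sup>2) * of_bool (2 \<in> A)"
    unfolding prob_carrier_step_q_1 prob_one_pickup by (simp add: power2_eq_square algebra_simps)
  finally show ?thesis .
qed

lemma drift_summand: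
  "measure_pmf.prob (carrier_law x) {g. g + i = count_le \<zeta> x} - of_bool (count_le \<zeta> x = i) =
     (if x \<in> \<zeta> \<and> x \<noteq> q
      then (1 - \<epsilon>) * (of_bool (count_le \<zeta> x = Suc i) - of_bool (count_le \<zeta> x = i)) else 0)
   + (if x = q then measure_pmf.prob (carrier_law q) {g. g + i = Suc j} - of_bool (i = Suc j) else 0)
   + (if x = Suc q
      then measure_pmf.prob (carrier_law q) {g. g - 1 + i = Suc j} - of_bool (i = Suc j) else 0)"
proof -
  have count_le_Suc_q: "count_le \<zeta> (Suc q) = Suc j"
    using count_le_Suc[OF \<zeta>(1), of q] count_le_q Suc_q_notin by simp
  consider "x = q" | "x = Suc q" | "x \<in> \<zeta>" "x \<noteq> q" | "x \<notin> \<zeta>" "x \<noteq> q" "x \<noteq> Suc q" by blast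
  then show ?thesis
  proof cases
    case 1
    then show ?thesis using count_le_q by (cases "i = Suc j") simp_all
  next
    case 2
    then show ?thesis using count_le_Suc_q Suc_q_notin
      by (cases "i = Suc j") (simp_all add: carrier_law_def vimage_def)
  next
    case 3
    then have "x \<noteq> Suc q" using Suc_q_notin by auto
    with 3 show ?thesis
      by (cases "count_le \<zeta> x = i"; cases "count_le \<zeta> x = Suc i")
         (simp_all add: carrier_law_def prob_one_pickup)
  next
    case 4
    then show ?thesis by (cases "count_le \<zeta> x = i") (simp_all add: carrier_law_def)
  qed
qed

lemma sum_of_bool_count_le_minus_q:
  assumes "1 \<le> m" "m \<le> d"
  shows "(\<Sum>x\<in>\<zeta> - {q}. of_bool (count_le \<zeta> x = m) :: real) = 1 - of_bool (m = Suc j)"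
proof -
  have "(\<Sum>x\<in>\<zeta> - {q}. of_bool (count_le \<zeta> x = m) :: real)
      = (\<Sum>x\<in>\<zeta>. of_bool (count_le \<zeta> x = m)) - of_bool (count_le \<zeta> q = m)"
    by (simp only: sum_diff1[OF \<zeta>(1)] q_in if_True)
  also have "\<dots> = 1 - of_bool (m = Suc j)"
    unfolding sum_of_bool_count_le_eq[OF \<zeta>(1) assms(1) assms(2)[folded \<zeta>(2)]] count_le_q
    by (simp add: eq_commute)
  finally show ?thesis .
qed

lemma gap_drift_eq_R_col:
  assumes i: "1 \<le> i" "i \<le> d - 1"
  shows "gap_drift \<epsilon> c \<zeta> i = R_col \<epsilon> c j i"
proof -
  define N where "N = Max \<zeta> + card \<zeta> + 1"
  have \<zeta>_le_N: "\<zeta> \<subseteq> {..N}" using \<zeta>(1) by (auto simp: N_def dest: Max_ge)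
  have q_N: "q \<in> {..N}" "Suc q \<in> {..N}"
    using Max_ge[OF \<zeta>(1) q_in] \<zeta>(2) d by (auto simp: N_def)
  let ?F = "\<lambda>x. (1 - \<epsilon>) * (of_bool (count_le \<zeta> x = Suc i) - of_bool (count_le \<zeta> x = i)) :: real"
  let ?P = "\<lambda>A. measure_pmf.prob (carrier_law q) A"
  have "gap_drift \<epsilon> c \<zeta> i = (\<Sum>x\<le>N. measure_pmf.prob (carrier_law x) {g. g + i = count_le \<zeta> x}
                                      - of_bool (count_le \<zeta> x = i))"
    using gap_drift_eq_sum[OF \<zeta>(1,3), of i] i \<zeta>(2) d by (simp add: N_def carrier_eq_carrier_law)
  also have "\<dots> = (\<Sum>x\<le>N. if x \<in> \<zeta> \<and> x \<noteq> q then ?F x else 0)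
      + (?P {g. g + i = Suc j} - of_bool (i = Suc j))
      + (?P {g. g - 1 + i = Suc j} - of_bool (i = Suc j))"
    unfolding drift_summand sum.distrib using q_N by simp
  also have "(\<Sum>x\<le>N. if x \<in> \<zeta> \<and> x \<noteq> q then ?F x else 0) = (\<Sum>x\<in>\<zeta> - {q}. ?F x)"
    using \<zeta>_le_N by (intro sum.mono_neutral_cong_right) auto
  also have "\<dots> = (1 - \<epsilon>) * (of_bool (i = Suc j) - of_bool (i = j))"
    using sum_of_bool_count_le_minus_q[of "Suc i"] sum_of_bool_count_le_minus_q[of i] i d
    by (simp add: sum_subtractf sum_distrib_left[symmetric])
  finally show ?thesis
    unfolding prob_carrier_law_q R_col_def
    by (cases "c = 1"; cases "i + 1 = j"; cases "i = j"; cases "i = j + 1")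
       (simp_all add: algebra_simps power2_eq_square)
qed

end

lemma R_col_eq_R_hat:
  assumes "1 \<le> i" "i \<le> d - 1" "1 \<le> j" "j \<le> d - 1"
  shows "R_col \<epsilon> c j i = (1 - \<epsilon>) * R_hat \<epsilon> c d i j"
  using assms unfolding R_col_def R_hat_def R_PT_def tridiag_def
  by (cases "c = 1"; cases "i + 1 = j"; cases "i = j"; cases "i = j + 1")
     (simp_all add: algebra_simps power2_eq_square)

theorem proposition6p3:
  fixes d j :: nat and \<epsilon> :: real and c :: enat and \<zeta> :: "nat set"
  assumes "d \<ge> 2" and "0 < \<epsilon>" and "\<epsilon> < 1" and "c \<ge> 1"
    and "1 \<le> j" and "j \<le> d - 1"
    and "finite \<zeta>" and "card \<zeta> = d" and "0 \<notin> \<zeta>"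
    and "gap \<zeta> j = 0"
    and "j + 1 \<le> d - 1 \<longrightarrow> gap \<zeta> (j + 1) \<ge> 2"
    and "\<forall>i \<in> {1..d-1} - {j, j + 1}. gap \<zeta> i \<ge> 1"
  shows "(\<forall>i \<in> {1..d-1}. gap_drift \<epsilon> c \<zeta> i = R_col \<epsilon> c j i)
       \<and> (\<forall>i \<in> {1..d-1}. gap_drift \<epsilon> c \<zeta> i = (1 - \<epsilon>) * R_hat \<epsilon> c d i j)"
proof -
  interpret sbbs_adjacent_pair \<epsilon> c \<zeta> d j
    using assms by unfold_locales auto
  have "gap_drift \<epsilon> c \<zeta> i = R_col \<epsilon> c j i" if "i \<in> {1..d-1}" for i
    using gap_drift_eq_R_col that by auto
  then show ?thesis
    using R_col_eq_R_hat assms(5,6) by auto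
qed

end
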